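(* Let $(X,I,T)$ be a relative monad in a 2-category $\mathcal{K}$ and $(S,S_0)$ a monad compatible with $I$. Then the assignments $d\mapsto\hat T$ with $\hat T(M,\mu)=(TM,T\mu\cdot dM)$, $\hat T(f)=Tf$, and $\hat T\mapsto\widehat{m_0}\cdot STs_0$ (where $\widehat{m_0}$ is the $S$-algebra structure of $\hat T(S_0,m_0)$) are mutually inverse bijections between relative distributive laws $d\colon ST\Rightarrow TS_0$ of $T$ over $(S,S_0)$ and liftings of $T$ to the algebras of $(S,S_0)$.
   Context: Conventions: 1-cells compose by juxtaposition; vertical composition of 2-cells is written $\cdot$; whiskering by juxtaposition. Relative monad: a relative monad $(X,I,T)$ in $\mathcal{K}$ consists of objects $X_0,X$, 1-cells $I,T\colon X_0\to X$, an operator $(-)^\dagger\colon[I,T]\to[T,T]$ (extension: for every span $A,B\colon O\to X_0$ a function sending 2-cells $IA\Rightarrow TB$ to 2-cells $TA\Rightarrow TB$, natural in $O$, $A$ and $B$) and a 2-cell $t\colon I\Rightarrow T$ such that $k^\dagger\cdot tA=k$, $(tA)^\dagger=1_{TA}$, $(l^\dagger\cdot k)^\dagger=l^\dagger\cdot k^\dagger$ for all $k\colon IA\Rightarrow TB$, $l\colon IB\Rightarrow TC$. Monad compatible with $I\colon X_0\to X$: a pair $(S,S_0)$ of monads $(X,S,m,s)$ and $(X_0,S_0,m_0,s_0)$ in $\mathcal{K}$ with $SI=IS_0$, $mI=Im_0$, $sI=Is_0$. Relative distributive law: a 2-cell $d\colon ST\Rightarrow TS_0$ such that (D1) $d\cdot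 mT=Tm_0\cdot dS_0\cdot Sd$; (D2) $d\cdot sT=Ts_0$; (D3) for all $A,B\colon O\to X_0$ and $f\colon IA\Rightarrow TB$, $dB\cdot S(f^\dagger)=(dB\cdot Sf)^\dagger\cdot dA$ (here $dB\cdot Sf\colon IS_0A=SIA\Rightarrow TS_0B$); (D4) $d\cdot St=tS_0$ as 2-cells $SI=IS_0\Rightarrow TS_0$. Indexed algebras: for a monad $(X,S,m,s)$ and object $K$, $S\text{-}\mathrm{Alg}(K)$ is the category whose objects are pairs $(M,\mu)$ with $M\colon K\to X$, $\mu\colon SM\Rightarrow M$, $\mu\cdot sM=1_M$, $\mu\cdot S\mu=\mu\cdot mM$, and whose morphisms $(M,\mu)\to(N,\nu)$ are 2-cells $f\colon M\Rightarrow N$ with $f\cdot\mu=\nu\cdot Sf$; this gives a 2-functor $S\text{-}\mathrm{Alg}(-)\colon\mathcal{K}^{op}\to\mathbf{Cat}$ by precomposition. Lifting to algebras: a lifting of $T$ to the algebras of $(S,S_0)$ is a 2-natural transformation $\hat T\colon S_0\text{-}\mathrm{Alg}(-)\to S\text{-}\mathrm{Alg}(-)$ of the form $\hat T(M,\mu)=(TM,\hat T\mu)$ on objects and $\hat T(f)=Tf$ on morphisms, carrying the relative monad structure over $I_*\colon(M,\mu)\mapsto(IM,I\mu)$ whose unit and extension are those of $T$, which means precisely: (a) for all $K$-indexed $S_0$-algebras $(M,\mu),(N,\nu)$ and every 2-cell $f\colon IM\Rightarrow TN$ with $f\cdot I\mu=\hat T\nu\cdot Sf$, one has $f^\dagger\cdot\hat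 T\mu=\hat T\nu\cdot Sf^\dagger$; (b) for every $(M,\mu)$, $tM\cdot I\mu=\hat T\mu\cdot StM$. *)

theory Defs
  imports Main
begin

text \<open>Objects of type 'o, 1-cells of type 'a, 2-cells of type 'c.
  comp1 g f is the composite "g f" (first f then g); vcomp b a is "b \<cdot> a";
  hcomp b a is the horizontal composite of b (outer) after a (inner).\<close>

record ('o,'a,'c) twocat =
  obs   :: "'o set"
  arrs  :: "'a set"
  cells :: "'c set"
  dom1  :: "'a \<Rightarrow> 'o"
  cod1  :: "'a \<Rightarrow> 'o"
  id1   :: "'o \<Rightarrow> 'a"
  comp1 :: "'a \<Rightarrow> 'a \<Rightarrow> 'a"
  src2  :: "'c \<Rightarrow> 'a"
  tgt2  :: "'c \<Rightarrow> 'a"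
  id2   :: "'a \<Rightarrow> 'c"
  vcomp :: "'c \<Rightarrow> 'c \<Rightarrow> 'c"
  hcomp :: "'c \<Rightarrow> 'c \<Rightarrow> 'c"

definition hom1 :: "('o,'a,'c) twocat \<Rightarrow> 'a \<Rightarrow> 'o \<Rightarrow> 'o \<Rightarrow> bool" where
  "hom1 C f a b \<longleftrightarrow> f \<in> arrs C \<and> dom1 C f = a \<and> cod1 C f = b"

definition cell2 :: "('o,'a,'c) twocat \<Rightarrow> 'c \<Rightarrow> 'a \<Rightarrow> 'a \<Rightarrow> bool" where
  "cell2 C \<alpha> f g \<longleftrightarrow> \<alpha> \<in> cells C \<and> src2 C \<alpha> = f \<and> tgt2 C \<alpha> = g"

definition twocat :: "('o,'a,'c) twocat \<Rightarrow> bool" where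
  "twocat C \<longleftrightarrow>
    (\<forall>f\<in>arrs C. dom1 C f \<in> obs C \<and> cod1 C f \<in> obs C)
  \<and> (\<forall>a\<in>obs C. hom1 C (id1 C a) a a)
  \<and> (\<forall>f\<in>arrs C. \<forall>g\<in>arrs C. cod1 C f = dom1 C g \<longrightarrow>
        hom1 C (comp1 C g f) (dom1 C f) (cod1 C g))
  \<and> (\<forall>f\<in>arrs C. \<forall>g\<in>arrs C. \<forall>h\<in>arrs C. cod1 C f = dom1 C g \<and> cod1 C g = dom1 C h \<longrightarrow>
        comp1 C h (comp1 C g f) = comp1 C (comp1 C h g) f)
  \<and> (\<forall>f\<in>arrs C. comp1 C (id1 C (cod1 C f)) f = f \<and> comp1 C f (id1 C (dom1 C f)) = f)
  \<and> (\<forall>\<alpha>\<in>cells C. src2 C \<alpha> \<in> arrs C \<and> tgt2 C \<alpha> \<in> arrs C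
        \<and> dom1 C (src2 C \<alpha>) = dom1 C (tgt2 C \<alpha>) \<and> cod1 C (src2 C \<alpha>) = cod1 C (tgt2 C \<alpha>))
  \<and> (\<forall>f\<in>arrs C. cell2 C (id2 C f) f f)
  \<and> (\<forall>\<alpha>\<in>cells C. \<forall>\<beta>\<in>cells C. tgt2 C \<alpha> = src2 C \<beta> \<longrightarrow>
        cell2 C (vcomp C \<beta> \<alpha>) (src2 C \<alpha>) (tgt2 C \<beta>))
  \<and> (\<forall>\<alpha>\<in>cells C. \<forall>\<beta>\<in>cells C. \<forall>\<gamma>\<in>cells C. tgt2 C \<alpha> = src2 C \<beta> \<and> tgt2 C \<beta> = src2 C \<gamma> \<longrightarrow>
        vcomp C \<gamma> (vcomp C \<beta> \<alpha>) = vcomp C (vcomp C \<gamma> \<beta>) \<alpha>)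
  \<and> (\<forall>\<alpha>\<in>cells C. vcomp C (id2 C (tgt2 C \<alpha>)) \<alpha> = \<alpha> \<and> vcomp C \<alpha> (id2 C (src2 C \<alpha>)) = \<alpha>)
  \<and> (\<forall>\<alpha>\<in>cells C. \<forall>\<beta>\<in>cells C. cod1 C (src2 C \<alpha>) = dom1 C (src2 C \<beta>) \<longrightarrow>
        cell2 C (hcomp C \<beta> \<alpha>) (comp1 C (src2 C \<beta>) (src2 C \<alpha>)) (comp1 C (tgt2 C \<beta>) (tgt2 C \<alpha>)))
  \<and> (\<forall>\<alpha>\<in>cells C. \<forall>\<beta>\<in>cells C. \<forall>\<gamma>\<in>cells C.
        cod1 C (src2 C \<alpha>) = dom1 C (src2 C \<beta>) \<and> cod1 C (src2 C \<beta>) = dom1 C (src2 C \<gamma>) \<longrightarrow>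
        hcomp C \<gamma> (hcomp C \<beta> \<alpha>) = hcomp C (hcomp C \<gamma> \<beta>) \<alpha>)
  \<and> (\<forall>\<alpha>\<in>cells C. hcomp C (id2 C (id1 C (cod1 C (src2 C \<alpha>)))) \<alpha> = \<alpha>
        \<and> hcomp C \<alpha> (id2 C (id1 C (dom1 C (src2 C \<alpha>)))) = \<alpha>)
  \<and> (\<forall>f\<in>arrs C. \<forall>g\<in>arrs C. cod1 C f = dom1 C g \<longrightarrow>
        hcomp C (id2 C g) (id2 C f) = id2 C (comp1 C g f))
  \<and> (\<forall>\<alpha>\<in>cells C. \<forall>\<alpha>'\<in>cells C. \<forall>\<beta>\<in>cells C. \<forall>\<beta>'\<in>cells C.
        tgt2 C \<alpha> = src2 C \<alpha>' \<and> tgt2 C \<beta> = src2 C \<beta>' \<and> cod1 C (src2 C \<alpha>) = dom1 C (src2 C \<beta>) \<longrightarrow>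
        hcomp C (vcomp C \<beta>' \<beta>) (vcomp C \<alpha>' \<alpha>) = vcomp C (hcomp C \<beta>' \<alpha>') (hcomp C \<beta> \<alpha>))"

text \<open>Whiskering: wl C F \<alpha> is "F\<alpha>", wr C \<alpha> F is "\<alpha>F".\<close>
definition wl :: "('o,'a,'c) twocat \<Rightarrow> 'a \<Rightarrow> 'c \<Rightarrow> 'c" where
  "wl C F \<alpha> = hcomp C (id2 C F) \<alpha>"

definition wr :: "('o,'a,'c) twocat \<Rightarrow> 'c \<Rightarrow> 'a \<Rightarrow> 'c" where
  "wr C \<alpha> F = hcomp C \<alpha> (id2 C F)"

definition monad :: "('o,'a,'c) twocat \<Rightarrow> 'o \<Rightarrow> 'a \<Rightarrow> 'c \<Rightarrow> 'c \<Rightarrow> bool" where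
  "monad C X S m s \<longleftrightarrow>
     hom1 C S X X \<and> cell2 C m (comp1 C S S) S \<and> cell2 C s (id1 C X) S
   \<and> vcomp C m (wr C m S) = vcomp C m (wl C S m)
   \<and> vcomp C m (wr C s S) = id2 C S
   \<and> vcomp C m (wl C S s) = id2 C S"

definition span :: "('o,'a,'c) twocat \<Rightarrow> 'o \<Rightarrow> 'a \<Rightarrow> 'a \<Rightarrow> bool" where
  "span C X0 A B \<longleftrightarrow> A \<in> arrs C \<and> B \<in> arrs C \<and> cod1 C A = X0 \<and> cod1 C B = X0
      \<and> dom1 C A = dom1 C B"

text \<open>Relative monad (X, I, T) with X0 the domain of I and T; ext A B k is "k dagger" for
  the span A, B.\<close>
definition relmonad :: "('o,'a,'c) twocat \<Rightarrow> 'o \<Rightarrow> 'o \<Rightarrow> 'a \<Rightarrow> 'a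
     \<Rightarrow> ('a \<Rightarrow> 'a \<Rightarrow> 'c \<Rightarrow> 'c) \<Rightarrow> 'c \<Rightarrow> bool" where
  "relmonad C X0 X I T ext t \<longleftrightarrow>
     hom1 C I X0 X \<and> hom1 C T X0 X \<and> cell2 C t I T
   \<and> (\<forall>A B k. span C X0 A B \<and> cell2 C k (comp1 C I A) (comp1 C T B) \<longrightarrow>
        cell2 C (ext A B k) (comp1 C T A) (comp1 C T B))
   \<comment> \<open>naturality in O\<close>
   \<and> (\<forall>A B k F. span C X0 A B \<and> cell2 C k (comp1 C I A) (comp1 C T B)
        \<and> F \<in> arrs C \<and> cod1 C F = dom1 C A \<longrightarrow>
        ext (comp1 C A F) (comp1 C B F) (wr C k F) = wr C (ext A B k) F)
   \<comment> \<open>naturality in A and B\<close>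
   \<and> (\<forall>A A' B B' \<alpha> \<beta> k. span C X0 A B \<and> span C X0 A' B' \<and> dom1 C A = dom1 C A'
        \<and> cell2 C \<alpha> A' A \<and> cell2 C \<beta> B B' \<and> cell2 C k (comp1 C I A) (comp1 C T B) \<longrightarrow>
        ext A' B' (vcomp C (wl C T \<beta>) (vcomp C k (wl C I \<alpha>)))
          = vcomp C (wl C T \<beta>) (vcomp C (ext A B k) (wl C T \<alpha>)))
   \<comment> \<open>laws\<close>
   \<and> (\<forall>A B k. span C X0 A B \<and> cell2 C k (comp1 C I A) (comp1 C T B) \<longrightarrow>
        vcomp C (ext A B k) (wr C t A) = k)
   \<and> (\<forall>A. A \<in> arrs C \<and> cod1 C A = X0 \<longrightarrow> ext A A (wr C t A) = id2 C (comp1 C T A))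
   \<and> (\<forall>A B D k l. span C X0 A B \<and> span C X0 B D
        \<and> cell2 C k (comp1 C I A) (comp1 C T B) \<and> cell2 C l (comp1 C I B) (comp1 C T D) \<longrightarrow>
        ext A D (vcomp C (ext B D l) k) = vcomp C (ext B D l) (ext A B k))"

definition compatible :: "('o,'a,'c) twocat \<Rightarrow> 'a \<Rightarrow> 'a \<Rightarrow> 'c \<Rightarrow> 'c \<Rightarrow> 'a \<Rightarrow> 'c \<Rightarrow> 'c \<Rightarrow> bool" where
  "compatible C I S m s S0 m0 s0 \<longleftrightarrow>
     comp1 C S I = comp1 C I S0 \<and> wr C m I = wl C I m0 \<and> wr C s I = wl C I s0"

definition reldist :: "('o,'a,'c) twocat \<Rightarrow> 'o \<Rightarrow> 'a \<Rightarrow> 'a \<Rightarrow> ('a \<Rightarrow> 'a \<Rightarrow> 'c \<Rightarrow> 'c) \<Rightarrow> 'c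
     \<Rightarrow> 'a \<Rightarrow> 'c \<Rightarrow> 'c \<Rightarrow> 'a \<Rightarrow> 'c \<Rightarrow> 'c \<Rightarrow> 'c \<Rightarrow> bool" where
  "reldist C X0 I T ext t S m s S0 m0 s0 d \<longleftrightarrow>
     cell2 C d (comp1 C S T) (comp1 C T S0)
   \<and> vcomp C d (wr C m T) = vcomp C (wl C T m0) (vcomp C (wr C d S0) (wl C S d))
   \<and> vcomp C d (wr C s T) = wl C T s0
   \<and> (\<forall>A B f. span C X0 A B \<and> cell2 C f (comp1 C I A) (comp1 C T B) \<longrightarrow>
        vcomp C (wr C d B) (wl C S (ext A B f))
          = vcomp C (ext (comp1 C S0 A) (comp1 C S0 B) (vcomp C (wr C d B) (wl C S f))) (wr C d A))
   \<and> vcomp C d (wl C S t) = wr C t S0"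

text \<open>(M, \<mu>) is an algebra of the monad (X,S,m,s) indexed by the object dom1 C M.\<close>
definition isalg :: "('o,'a,'c) twocat \<Rightarrow> 'o \<Rightarrow> 'a \<Rightarrow> 'c \<Rightarrow> 'c \<Rightarrow> 'a \<Rightarrow> 'c \<Rightarrow> bool" where
  "isalg C X S m s M \<mu> \<longleftrightarrow>
     M \<in> arrs C \<and> cod1 C M = X \<and> cell2 C \<mu> (comp1 C S M) M
   \<and> vcomp C \<mu> (wr C s M) = id2 C M
   \<and> vcomp C \<mu> (wl C S \<mu>) = vcomp C \<mu> (wr C m M)"

definition algmor :: "('o,'a,'c) twocat \<Rightarrow> 'a \<Rightarrow> 'a \<Rightarrow> 'c \<Rightarrow> 'a \<Rightarrow> 'c \<Rightarrow> 'c \<Rightarrow> bool" where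
  "algmor C S M \<mu> N \<nu> f \<longleftrightarrow> cell2 C f M N \<and> vcomp C f \<mu> = vcomp C \<nu> (wl C S f)"

text \<open>A lifting is represented by the assignment L M \<mu> = T-hat(mu) of S-algebra structures
  on TM, for every indexed S0-algebra (M,\<mu>); it is taken extensional (undefined
  off S0-algebras). On morphisms the lifting is forced to be f \<mapsto> Tf.\<close>
definition lifting :: "('o,'a,'c) twocat \<Rightarrow> 'o \<Rightarrow> 'o \<Rightarrow> 'a \<Rightarrow> 'a \<Rightarrow> ('a \<Rightarrow> 'a \<Rightarrow> 'c \<Rightarrow> 'c) \<Rightarrow> 'c
     \<Rightarrow> 'a \<Rightarrow> 'c \<Rightarrow> 'c \<Rightarrow> 'a \<Rightarrow> 'c \<Rightarrow> 'c \<Rightarrow> ('a \<Rightarrow> 'c \<Rightarrow> 'c) \<Rightarrow> bool" where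
  "lifting C X0 X I T ext t S m s S0 m0 s0 L \<longleftrightarrow>
     (\<forall>M \<mu>. \<not> isalg C X0 S0 m0 s0 M \<mu> \<longrightarrow> L M \<mu> = undefined)
   \<comment> \<open>objects go to S-algebras (TM, L M \<mu>)\<close>
   \<and> (\<forall>M \<mu>. isalg C X0 S0 m0 s0 M \<mu> \<longrightarrow> isalg C X S m s (comp1 C T M) (L M \<mu>))
   \<comment> \<open>functoriality: Tf is an S-algebra morphism\<close>
   \<and> (\<forall>M \<mu> N \<nu> f. isalg C X0 S0 m0 s0 M \<mu> \<and> isalg C X0 S0 m0 s0 N \<nu>
        \<and> algmor C S0 M \<mu> N \<nu> f \<longrightarrow>
        algmor C S (comp1 C T M) (L M \<mu>) (comp1 C T N) (L N \<nu>) (wl C T f))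
   \<comment> \<open>2-naturality (reindexing along 1-cells F : K' \<rightarrow> K)\<close>
   \<and> (\<forall>M \<mu> F. isalg C X0 S0 m0 s0 M \<mu> \<and> F \<in> arrs C \<and> cod1 C F = dom1 C M \<longrightarrow>
        L (comp1 C M F) (wr C \<mu> F) = wr C (L M \<mu>) F)
   \<comment> \<open>(a)\<close>
   \<and> (\<forall>M \<mu> N \<nu> f. isalg C X0 S0 m0 s0 M \<mu> \<and> isalg C X0 S0 m0 s0 N \<nu> \<and> dom1 C M = dom1 C N
        \<and> cell2 C f (comp1 C I M) (comp1 C T N)
        \<and> vcomp C f (wl C I \<mu>) = vcomp C (L N \<nu>) (wl C S f) \<longrightarrow>
        vcomp C (ext M N f) (L M \<mu>) = vcomp C (L N \<nu>) (wl C S (ext M N f)))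
   \<comment> \<open>(b)\<close>
   \<and> (\<forall>M \<mu>. isalg C X0 S0 m0 s0 M \<mu> \<longrightarrow>
        vcomp C (wr C t M) (wl C I \<mu>) = vcomp C (L M \<mu>) (wl C S (wr C t M)))"

definition lift_of_dist :: "('o,'a,'c) twocat \<Rightarrow> 'o \<Rightarrow> 'a \<Rightarrow> 'a \<Rightarrow> 'c \<Rightarrow> 'c \<Rightarrow> 'c
     \<Rightarrow> ('a \<Rightarrow> 'c \<Rightarrow> 'c)" where
  "lift_of_dist C X0 T S0 m0 s0 d =
     (\<lambda>M \<mu>. if isalg C X0 S0 m0 s0 M \<mu> then vcomp C (wl C T \<mu>) (wr C d M) else undefined)"

definition dist_of_lift :: "('o,'a,'c) twocat \<Rightarrow> 'a \<Rightarrow> 'a \<Rightarrow> 'a \<Rightarrow> 'c \<Rightarrow> 'c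
     \<Rightarrow> ('a \<Rightarrow> 'c \<Rightarrow> 'c) \<Rightarrow> 'c" where
  "dist_of_lift C S T S0 m0 s0 L = vcomp C (L S0 m0) (wl C (comp1 C S T) s0)"

end

theory Submission
  imports Defs
begin

text \<open>Given a relative distributive law d, the structure T\<mu> \<cdot> dM on TM is an S-algebra by the
  axioms (D1), (D2) of d, and it is compatible with extension and unit of T by (D3), (D4).
  Conversely, a lifting L is determined by its value m0_hat = L(S0, m0) on the free S0-algebra:
  reindexing along A turns m0_hat A into the lifted structure of the free algebra (S0A, m0A), and
  since \<mu> : (S0M, m0M) \<rightarrow> (M, \<mu>) is a morphism of algebras split by s0M, functoriality of the
  lifting forces L(M, \<mu>) = T\<mu> \<cdot> m0_hat M \<cdot> STs0M. So d = m0_hat \<cdot> STs0 recovers the lifting,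
  and the axioms (D1)--(D4) of this d come from the algebra laws of m0_hat, condition (b), and
  condition (a) applied to free algebras.\<close>

locale strict_twocat =
  fixes C :: "('o,'a,'c) twocat"
  assumes twocat: "twocat C"
begin

lemma id1_hom:
  "a \<in> obs C \<Longrightarrow> id1 C a \<in> arrs C"
  "a \<in> obs C \<Longrightarrow> dom1 C (id1 C a) = a"
  "a \<in> obs C \<Longrightarrow> cod1 C (id1 C a) = a"
  using twocat unfolding twocat_def hom1_def by auto

lemma comp1_hom:
  "f \<in> arrs C \<Longrightarrow> g \<in> arrs C \<Longrightarrow> cod1 C f = dom1 C g \<Longrightarrow> comp1 C g f \<in> arrs C"
  "f \<in> arrs C \<Longrightarrow> g \<in> arrs C \<Longrightarrow> cod1 C f = dom1 C g \<Longrightarrow> dom1 C (comp1 C g f) = dom1 C f"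
  "f \<in> arrs C \<Longrightarrow> g \<in> arrs C \<Longrightarrow> cod1 C f = dom1 C g \<Longrightarrow> cod1 C (comp1 C g f) = cod1 C g"
  using twocat unfolding twocat_def hom1_def by auto

lemma comp1_assoc:
  "f \<in> arrs C \<Longrightarrow> g \<in> arrs C \<Longrightarrow> h \<in> arrs C \<Longrightarrow> cod1 C f = dom1 C g \<Longrightarrow> cod1 C g = dom1 C h
   \<Longrightarrow> comp1 C (comp1 C h g) f = comp1 C h (comp1 C g f)"
  using twocat unfolding twocat_def by metis

lemma comp1_id1:
  "f \<in> arrs C \<Longrightarrow> cod1 C f = a \<Longrightarrow> comp1 C (id1 C a) f = f"
  "f \<in> arrs C \<Longrightarrow> dom1 C f = a \<Longrightarrow> comp1 C f (id1 C a) = f"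
  using twocat unfolding twocat_def by auto

lemma cell_src_tgt:
  "\<alpha> \<in> cells C \<Longrightarrow> src2 C \<alpha> \<in> arrs C"
  "\<alpha> \<in> cells C \<Longrightarrow> tgt2 C \<alpha> \<in> arrs C"
  "\<alpha> \<in> cells C \<Longrightarrow> dom1 C (tgt2 C \<alpha>) = dom1 C (src2 C \<alpha>)"
  "\<alpha> \<in> cells C \<Longrightarrow> cod1 C (tgt2 C \<alpha>) = cod1 C (src2 C \<alpha>)"
  using twocat unfolding twocat_def by auto

lemma id2_cell:
  "f \<in> arrs C \<Longrightarrow> id2 C f \<in> cells C"
  "f \<in> arrs C \<Longrightarrow> src2 C (id2 C f) = f"
  "f \<in> arrs C \<Longrightarrow> tgt2 C (id2 C f) = f"
  using twocat unfolding twocat_def cell2_def by auto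

lemma vcomp_cell:
  "\<alpha> \<in> cells C \<Longrightarrow> \<beta> \<in> cells C \<Longrightarrow> tgt2 C \<alpha> = src2 C \<beta> \<Longrightarrow> vcomp C \<beta> \<alpha> \<in> cells C"
  "\<alpha> \<in> cells C \<Longrightarrow> \<beta> \<in> cells C \<Longrightarrow> tgt2 C \<alpha> = src2 C \<beta> \<Longrightarrow> src2 C (vcomp C \<beta> \<alpha>) = src2 C \<alpha>"
  "\<alpha> \<in> cells C \<Longrightarrow> \<beta> \<in> cells C \<Longrightarrow> tgt2 C \<alpha> = src2 C \<beta> \<Longrightarrow> tgt2 C (vcomp C \<beta> \<alpha>) = tgt2 C \<beta>"
  using twocat unfolding twocat_def cell2_def by auto

lemma vcomp_assoc:
  "\<alpha> \<in> cells C \<Longrightarrow> \<beta> \<in> cells C \<Longrightarrow> \<gamma> \<in> cells C \<Longrightarrow> tgt2 C \<alpha> = src2 C \<beta> \<Longrightarrow> tgt2 C \<beta> = src2 C \<gamma>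
   \<Longrightarrow> vcomp C (vcomp C \<gamma> \<beta>) \<alpha> = vcomp C \<gamma> (vcomp C \<beta> \<alpha>)"
  using twocat unfolding twocat_def by metis

lemma vcomp_id2:
  "\<alpha> \<in> cells C \<Longrightarrow> tgt2 C \<alpha> = f \<Longrightarrow> vcomp C (id2 C f) \<alpha> = \<alpha>"
  "\<alpha> \<in> cells C \<Longrightarrow> src2 C \<alpha> = f \<Longrightarrow> vcomp C \<alpha> (id2 C f) = \<alpha>"
  using twocat unfolding twocat_def by auto

lemma hcomp_cell:
  "\<alpha> \<in> cells C \<Longrightarrow> \<beta> \<in> cells C \<Longrightarrow> cod1 C (src2 C \<alpha>) = dom1 C (src2 C \<beta>) \<Longrightarrow> hcomp C \<beta> \<alpha> \<in> cells C"
  "\<alpha> \<in> cells C \<Longrightarrow> \<beta> \<in> cells C \<Longrightarrow> cod1 C (src2 C \<alpha>) = dom1 C (src2 C \<beta>) \<Longrightarrow>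
   src2 C (hcomp C \<beta> \<alpha>) = comp1 C (src2 C \<beta>) (src2 C \<alpha>)"
  "\<alpha> \<in> cells C \<Longrightarrow> \<beta> \<in> cells C \<Longrightarrow> cod1 C (src2 C \<alpha>) = dom1 C (src2 C \<beta>) \<Longrightarrow>
   tgt2 C (hcomp C \<beta> \<alpha>) = comp1 C (tgt2 C \<beta>) (tgt2 C \<alpha>)"
  using twocat unfolding twocat_def cell2_def by - (blast+)

lemma hcomp_assoc:
  "\<alpha> \<in> cells C \<Longrightarrow> \<beta> \<in> cells C \<Longrightarrow> \<gamma> \<in> cells C \<Longrightarrow>
   cod1 C (src2 C \<alpha>) = dom1 C (src2 C \<beta>) \<Longrightarrow> cod1 C (src2 C \<beta>) = dom1 C (src2 C \<gamma>) \<Longrightarrow>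
   hcomp C \<gamma> (hcomp C \<beta> \<alpha>) = hcomp C (hcomp C \<gamma> \<beta>) \<alpha>"
  using twocat unfolding twocat_def by metis

lemma hcomp_id2_id1:
  "\<alpha> \<in> cells C \<Longrightarrow> hcomp C (id2 C (id1 C (cod1 C (src2 C \<alpha>)))) \<alpha> = \<alpha>"
  "\<alpha> \<in> cells C \<Longrightarrow> hcomp C \<alpha> (id2 C (id1 C (dom1 C (src2 C \<alpha>)))) = \<alpha>"
  using twocat unfolding twocat_def by - (blast+)

lemma hcomp_id2:
  "f \<in> arrs C \<Longrightarrow> g \<in> arrs C \<Longrightarrow> cod1 C f = dom1 C g \<Longrightarrow>
   hcomp C (id2 C g) (id2 C f) = id2 C (comp1 C g f)"
  using twocat unfolding twocat_def by - (blast+)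

lemma interchange:
  "\<alpha> \<in> cells C \<Longrightarrow> \<alpha>' \<in> cells C \<Longrightarrow> \<beta> \<in> cells C \<Longrightarrow> \<beta>' \<in> cells C \<Longrightarrow>
   tgt2 C \<alpha> = src2 C \<alpha>' \<Longrightarrow> tgt2 C \<beta> = src2 C \<beta>' \<Longrightarrow> cod1 C (src2 C \<alpha>) = dom1 C (src2 C \<beta>) \<Longrightarrow>
   hcomp C (vcomp C \<beta>' \<beta>) (vcomp C \<alpha>' \<alpha>) = vcomp C (hcomp C \<beta>' \<alpha>') (hcomp C \<beta> \<alpha>)"
  using twocat unfolding twocat_def by metis

declare id1_hom [simp] comp1_hom [simp] comp1_assoc [simp]
  comp1_id1 [simp] cell_src_tgt [simp] id2_cell [simp] vcomp_cell [simp] vcomp_id2 [simp]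
  vcomp_assoc [simp]

lemma wl_cell [simp]:
  "F \<in> arrs C \<Longrightarrow> \<alpha> \<in> cells C \<Longrightarrow> cod1 C (src2 C \<alpha>) = dom1 C F \<Longrightarrow> wl C F \<alpha> \<in> cells C"
  "F \<in> arrs C \<Longrightarrow> \<alpha> \<in> cells C \<Longrightarrow> cod1 C (src2 C \<alpha>) = dom1 C F \<Longrightarrow>
   src2 C (wl C F \<alpha>) = comp1 C F (src2 C \<alpha>)"
  "F \<in> arrs C \<Longrightarrow> \<alpha> \<in> cells C \<Longrightarrow> cod1 C (src2 C \<alpha>) = dom1 C F \<Longrightarrow>
   tgt2 C (wl C F \<alpha>) = comp1 C F (tgt2 C \<alpha>)"
  unfolding wl_def using hcomp_cell[of \<alpha> "id2 C F"] by auto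

lemma wr_cell [simp]:
  "F \<in> arrs C \<Longrightarrow> \<alpha> \<in> cells C \<Longrightarrow> cod1 C F = dom1 C (src2 C \<alpha>) \<Longrightarrow> wr C \<alpha> F \<in> cells C"
  "F \<in> arrs C \<Longrightarrow> \<alpha> \<in> cells C \<Longrightarrow> cod1 C F = dom1 C (src2 C \<alpha>) \<Longrightarrow>
   src2 C (wr C \<alpha> F) = comp1 C (src2 C \<alpha>) F"
  "F \<in> arrs C \<Longrightarrow> \<alpha> \<in> cells C \<Longrightarrow> cod1 C F = dom1 C (src2 C \<alpha>) \<Longrightarrow>
   tgt2 C (wr C \<alpha> F) = comp1 C (tgt2 C \<alpha>) F"
  unfolding wr_def using hcomp_cell[of "id2 C F" \<alpha>] by auto

lemma wl_vcomp [simp]: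
  "F \<in> arrs C \<Longrightarrow> \<alpha> \<in> cells C \<Longrightarrow> \<beta> \<in> cells C \<Longrightarrow> tgt2 C \<alpha> = src2 C \<beta> \<Longrightarrow>
   cod1 C (src2 C \<alpha>) = dom1 C F \<Longrightarrow> wl C F (vcomp C \<beta> \<alpha>) = vcomp C (wl C F \<beta>) (wl C F \<alpha>)"
  unfolding wl_def using interchange[of \<alpha> \<beta> "id2 C F" "id2 C F"] by simp

lemma wr_vcomp [simp]:
  "F \<in> arrs C \<Longrightarrow> \<alpha> \<in> cells C \<Longrightarrow> \<beta> \<in> cells C \<Longrightarrow> tgt2 C \<alpha> = src2 C \<beta> \<Longrightarrow>
   cod1 C F = dom1 C (src2 C \<alpha>) \<Longrightarrow> wr C (vcomp C \<beta> \<alpha>) F = vcomp C (wr C \<beta> F) (wr C \<alpha> F)"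
  unfolding wr_def using interchange[of "id2 C F" "id2 C F" \<alpha> \<beta>] by simp

lemma wl_id2 [simp]:
  "F \<in> arrs C \<Longrightarrow> G \<in> arrs C \<Longrightarrow> cod1 C G = dom1 C F \<Longrightarrow> wl C F (id2 C G) = id2 C (comp1 C F G)"
  unfolding wl_def by (simp add: hcomp_id2)

lemma wr_id2 [simp]:
  "F \<in> arrs C \<Longrightarrow> G \<in> arrs C \<Longrightarrow> cod1 C F = dom1 C G \<Longrightarrow> wr C (id2 C G) F = id2 C (comp1 C G F)"
  unfolding wr_def by (simp add: hcomp_id2)

lemma wl_wl [simp]:
  "F \<in> arrs C \<Longrightarrow> G \<in> arrs C \<Longrightarrow> \<alpha> \<in> cells C \<Longrightarrow> cod1 C G = dom1 C F \<Longrightarrow>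
   cod1 C (src2 C \<alpha>) = dom1 C G \<Longrightarrow> wl C F (wl C G \<alpha>) = wl C (comp1 C F G) \<alpha>"
  unfolding wl_def by (simp add: hcomp_assoc hcomp_id2)

lemma wr_wr [simp]:
  "F \<in> arrs C \<Longrightarrow> G \<in> arrs C \<Longrightarrow> \<alpha> \<in> cells C \<Longrightarrow> cod1 C G = dom1 C F \<Longrightarrow>
   cod1 C F = dom1 C (src2 C \<alpha>) \<Longrightarrow> wr C (wr C \<alpha> F) G = wr C \<alpha> (comp1 C F G)"
  unfolding wr_def by (simp add: hcomp_assoc[of "id2 C G" "id2 C F" \<alpha>, symmetric] hcomp_id2)

lemma wr_wl [simp]:
  "F \<in> arrs C \<Longrightarrow> G \<in> arrs C \<Longrightarrow> \<alpha> \<in> cells C \<Longrightarrow> cod1 C (src2 C \<alpha>) = dom1 C F \<Longrightarrow>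
   cod1 C G = dom1 C (src2 C \<alpha>) \<Longrightarrow> wr C (wl C F \<alpha>) G = wl C F (wr C \<alpha> G)"
  unfolding wr_def wl_def by (simp add: hcomp_assoc[of "id2 C G" \<alpha> "id2 C F", symmetric] hcomp_cell)

lemma wl_id1 [simp]: "\<alpha> \<in> cells C \<Longrightarrow> cod1 C (src2 C \<alpha>) = a \<Longrightarrow> wl C (id1 C a) \<alpha> = \<alpha>"
  unfolding wl_def using hcomp_id2_id1 by auto

lemma wr_id1 [simp]: "\<alpha> \<in> cells C \<Longrightarrow> dom1 C (src2 C \<alpha>) = a \<Longrightarrow> wr C \<alpha> (id1 C a) = \<alpha>"
  unfolding wr_def using hcomp_id2_id1 by auto

lemma whisker_exchange:
  assumes "\<alpha> \<in> cells C" "\<beta> \<in> cells C" "cod1 C (src2 C \<alpha>) = dom1 C (src2 C \<beta>)"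
  shows "vcomp C (wl C (tgt2 C \<beta>) \<alpha>) (wr C \<beta> (src2 C \<alpha>))
       = vcomp C (wr C \<beta> (tgt2 C \<alpha>)) (wl C (src2 C \<beta>) \<alpha>)"
proof -
  have "vcomp C (wl C (tgt2 C \<beta>) \<alpha>) (wr C \<beta> (src2 C \<alpha>)) = hcomp C \<beta> \<alpha>"
    unfolding wl_def wr_def
    using assms interchange[of "id2 C (src2 C \<alpha>)" \<alpha> \<beta> "id2 C (tgt2 C \<beta>)"] by simp
  moreover have "vcomp C (wr C \<beta> (tgt2 C \<alpha>)) (wl C (src2 C \<beta>) \<alpha>) = hcomp C \<beta> \<alpha>"
    unfolding wl_def wr_def
    using assms interchange[of \<alpha> "id2 C (tgt2 C \<alpha>)" "id2 C (src2 C \<beta>)" \<beta>] by simp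
  ultimately show ?thesis by simp
qed

text \<open>The next two lemmas let the simplifier use an equation between composites inside a longer
  right-associated composite.\<close>

lemma vcomp_assoc_cong:
  assumes "vcomp C b c = vcomp C b' c'" "b \<in> cells C" "c \<in> cells C" "b' \<in> cells C" "c' \<in> cells C"
    "tgt2 C c = src2 C b" "tgt2 C c' = src2 C b'" "src2 C c' = src2 C c"
    "r \<in> cells C" "tgt2 C r = src2 C c"
  shows "vcomp C b (vcomp C c r) = vcomp C b' (vcomp C c' r)"
  using assms vcomp_assoc[of r c b] vcomp_assoc[of r c' b'] by metis

lemma vcomp_assoc_subst:
  assumes "vcomp C b c = e" "b \<in> cells C" "c \<in> cells C"
    "tgt2 C c = src2 C b" "r \<in> cells C" "tgt2 C r = src2 C c"
  shows "vcomp C b (vcomp C c r) = vcomp C e r"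
  using assms vcomp_assoc[of r c b] by metis

end

locale relmonad_compatible_monad = strict_twocat C for C :: "('o,'a,'c) twocat" +
  fixes X0 X I T ext t S m s S0 m0 s0
  assumes X0: "X0 \<in> obs C" and X: "X \<in> obs C"
    and relmonad: "relmonad C X0 X I T ext t"
    and monad_S: "monad C X S m s" and monad_S0: "monad C X0 S0 m0 s0"
    and compatible: "compatible C I S m s S0 m0 s0"
begin

lemma structure_arrs [simp]:
  "X0 \<in> obs C" "X \<in> obs C"
  "I \<in> arrs C" "dom1 C I = X0" "cod1 C I = X"
  "T \<in> arrs C" "dom1 C T = X0" "cod1 C T = X"
  "S \<in> arrs C" "dom1 C S = X" "cod1 C S = X"
  "S0 \<in> arrs C" "dom1 C S0 = X0" "cod1 C S0 = X0"
  using X0 X relmonad monad_S monad_S0 unfolding relmonad_def monad_def hom1_def by auto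

lemma structure_cells [simp]:
  "t \<in> cells C" "src2 C t = I" "tgt2 C t = T"
  "m \<in> cells C" "src2 C m = comp1 C S S" "tgt2 C m = S"
  "s \<in> cells C" "src2 C s = id1 C X" "tgt2 C s = S"
  "m0 \<in> cells C" "src2 C m0 = comp1 C S0 S0" "tgt2 C m0 = S0"
  "s0 \<in> cells C" "src2 C s0 = id1 C X0" "tgt2 C s0 = S0"
  using relmonad monad_S monad_S0 unfolding relmonad_def monad_def cell2_def by auto

lemma S_I [simp]: "comp1 C S I = comp1 C I S0"
  using compatible unfolding compatible_def by auto

lemma S_I_comp1 [simp]:
  "A \<in> arrs C \<Longrightarrow> cod1 C A = X0 \<Longrightarrow> comp1 C S (comp1 C I A) = comp1 C I (comp1 C S0 A)"
  using comp1_assoc[of A I S] comp1_assoc[of A S0 I] by simp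

lemma wl_I_wr_m0:
  "A \<in> arrs C \<Longrightarrow> cod1 C A = X0 \<Longrightarrow> wl C I (wr C m0 A) = wr C m (comp1 C I A)"
  using compatible wr_wl[of I A m0] wr_wr[of I A m] unfolding compatible_def by simp

lemma wl_I_wr_s0:
  "A \<in> arrs C \<Longrightarrow> cod1 C A = X0 \<Longrightarrow> wl C I (wr C s0 A) = wr C s (comp1 C I A)"
  using compatible wr_wl[of I A s0] wr_wr[of I A s] unfolding compatible_def by simp

lemma m0_assoc: "vcomp C m0 (wr C m0 S0) = vcomp C m0 (wl C S0 m0)"
  and m0_wr_s0: "vcomp C m0 (wr C s0 S0) = id2 C S0"
  and m0_wl_s0: "vcomp C m0 (wl C S0 s0) = id2 C S0"
  using monad_S0 unfolding monad_def by auto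

lemma ext_cell [simp]:
  assumes "A \<in> arrs C" "B \<in> arrs C" "cod1 C A = X0" "cod1 C B = X0" "dom1 C A = dom1 C B"
    "k \<in> cells C" "src2 C k = comp1 C I A" "tgt2 C k = comp1 C T B"
  shows "ext A B k \<in> cells C" "src2 C (ext A B k) = comp1 C T A" "tgt2 C (ext A B k) = comp1 C T B"
  using relmonad assms unfolding relmonad_def span_def cell2_def by auto

lemma ext_natural:
  assumes "A \<in> arrs C" "B \<in> arrs C" "cod1 C A = X0" "cod1 C B = X0" "dom1 C A = dom1 C B"
    "A' \<in> arrs C" "B' \<in> arrs C" "cod1 C A' = X0" "cod1 C B' = X0" "dom1 C A' = dom1 C B'"
    "dom1 C A = dom1 C A'"
    "\<alpha> \<in> cells C" "src2 C \<alpha> = A'" "tgt2 C \<alpha> = A"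
    "\<beta> \<in> cells C" "src2 C \<beta> = B" "tgt2 C \<beta> = B'"
    "k \<in> cells C" "src2 C k = comp1 C I A" "tgt2 C k = comp1 C T B"
  shows "ext A' B' (vcomp C (wl C T \<beta>) (vcomp C k (wl C I \<alpha>)))
       = vcomp C (wl C T \<beta>) (vcomp C (ext A B k) (wl C T \<alpha>))"
  using relmonad assms unfolding relmonad_def span_def cell2_def by blast

lemma isalg_S0D:
  assumes "isalg C X0 S0 m0 s0 M \<mu>"
  shows "M \<in> arrs C" "cod1 C M = X0" "\<mu> \<in> cells C" "src2 C \<mu> = comp1 C S0 M" "tgt2 C \<mu> = M"
    "vcomp C \<mu> (wr C s0 M) = id2 C M" "vcomp C \<mu> (wl C S0 \<mu>) = vcomp C \<mu> (wr C m0 M)"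
  using assms unfolding isalg_def cell2_def by auto

lemma isalg_SD:
  assumes "isalg C X S m s M \<mu>"
  shows "M \<in> arrs C" "cod1 C M = X" "\<mu> \<in> cells C" "src2 C \<mu> = comp1 C S M" "tgt2 C \<mu> = M"
    "vcomp C \<mu> (wr C s M) = id2 C M" "vcomp C \<mu> (wl C S \<mu>) = vcomp C \<mu> (wr C m M)"
  using assms unfolding isalg_def cell2_def by auto

lemma isalg_free: "isalg C X0 S0 m0 s0 S0 m0"
  unfolding isalg_def cell2_def using m0_wr_s0 m0_assoc by simp

lemma isalg_wr:
  assumes \<mu>: "isalg C X0 S0 m0 s0 M \<mu>" and F: "F \<in> arrs C" "cod1 C F = dom1 C M"
  shows "isalg C X0 S0 m0 s0 (comp1 C M F) (wr C \<mu> F)"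
proof -
  note \<mu>_cell = isalg_S0D(1-5)[OF \<mu>]
  have "wr C (vcomp C \<mu> (wr C s0 M)) F = wr C (id2 C M) F"
    and "wr C (vcomp C \<mu> (wl C S0 \<mu>)) F = wr C (vcomp C \<mu> (wr C m0 M)) F"
    using isalg_S0D(6,7)[OF \<mu>] by simp_all
  then show ?thesis unfolding isalg_def cell2_def using \<mu>_cell F by simp
qed

lemma isalg_free_wr:
  "A \<in> arrs C \<Longrightarrow> cod1 C A = X0 \<Longrightarrow> isalg C X0 S0 m0 s0 (comp1 C S0 A) (wr C m0 A)"
  by (rule isalg_wr[OF isalg_free]) auto

lemma algmor_structure:
  assumes "isalg C X0 S0 m0 s0 M \<mu>"
  shows "algmor C S0 (comp1 C S0 M) (wr C m0 M) M \<mu> \<mu>"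
  using isalg_S0D[OF assms] unfolding algmor_def cell2_def by simp

end

locale relative_distributive_law = relmonad_compatible_monad +
  fixes d
  assumes reldist: "reldist C X0 I T ext t S m s S0 m0 s0 d"
begin

lemma d_cell [simp]: "d \<in> cells C" "src2 C d = comp1 C S T" "tgt2 C d = comp1 C T S0"
  using reldist unfolding reldist_def cell2_def by auto

lemma d_m: "vcomp C d (wr C m T) = vcomp C (wl C T m0) (vcomp C (wr C d S0) (wl C S d))"
  and d_s: "vcomp C d (wr C s T) = wl C T s0"
  and d_t: "vcomp C d (wl C S t) = wr C t S0"
  using reldist unfolding reldist_def by auto

lemma d_ext:
  assumes "A \<in> arrs C" "B \<in> arrs C" "cod1 C A = X0" "cod1 C B = X0" "dom1 C A = dom1 C B"
    "f \<in> cells C" "src2 C f = comp1 C I A" "tgt2 C f = comp1 C T B"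
  shows "vcomp C (wr C d B) (wl C S (ext A B f))
       = vcomp C (ext (comp1 C S0 A) (comp1 C S0 B) (vcomp C (wr C d B) (wl C S f))) (wr C d A)"
  using reldist assms unfolding reldist_def span_def cell2_def by blast

abbreviation "T_hat \<equiv> lift_of_dist C X0 T S0 m0 s0 d"

lemma T_hat_eq: "isalg C X0 S0 m0 s0 M \<mu> \<Longrightarrow> T_hat M \<mu> = vcomp C (wl C T \<mu>) (wr C d M)"
  unfolding lift_of_dist_def by simp

lemma isalg_T_hat:
  assumes \<mu>: "isalg C X0 S0 m0 s0 M \<mu>"
  shows "isalg C X S m s (comp1 C T M) (T_hat M \<mu>)"
proof -
  note [simp] = isalg_S0D(1-5)[OF \<mu>]
  have "wr C (vcomp C d (wr C s T)) M = wr C (wl C T s0) M"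
    using d_s by simp
  then have d_s_M: "vcomp C (wr C d M) (wr C s (comp1 C T M)) = wl C T (wr C s0 M)"
    by simp
  have "wl C T (vcomp C \<mu> (wr C s0 M)) = wl C T (id2 C M)"
    using isalg_S0D(6)[OF \<mu>] by simp
  then have \<mu>_unit: "vcomp C (wl C T \<mu>) (wl C T (wr C s0 M)) = id2 C (comp1 C T M)"
    by simp
  have "wr C (vcomp C d (wr C m T)) M
      = wr C (vcomp C (wl C T m0) (vcomp C (wr C d S0) (wl C S d))) M"
    using d_m by simp
  then have d_m_M: "vcomp C (wr C d M) (wr C m (comp1 C T M))
      = vcomp C (wl C T (wr C m0 M)) (vcomp C (wr C d (comp1 C S0 M)) (wl C S (wr C d M)))"
    by simp
  have "vcomp C (wl C (comp1 C T S0) \<mu>) (wr C d (comp1 C S0 M))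
      = vcomp C (wr C d M) (wl C (comp1 C S T) \<mu>)"
    using whisker_exchange[of \<mu> d] by simp
  note d_natural = vcomp_assoc_cong[OF this[symmetric], simplified]
  have "wl C T (vcomp C \<mu> (wl C S0 \<mu>)) = wl C T (vcomp C \<mu> (wr C m0 M))"
    using isalg_S0D(7)[OF \<mu>] by simp
  then have "vcomp C (wl C T \<mu>) (wl C (comp1 C T S0) \<mu>) = vcomp C (wl C T \<mu>) (wl C T (wr C m0 M))"
    by simp
  note \<mu>_assoc = vcomp_assoc_cong[OF this, simplified]
  have "comp1 C T M \<in> arrs C" "cod1 C (comp1 C T M) = X" "T_hat M \<mu> \<in> cells C"
    "src2 C (T_hat M \<mu>) = comp1 C S (comp1 C T M)" "tgt2 C (T_hat M \<mu>) = comp1 C T M"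
    unfolding T_hat_eq[OF \<mu>] by simp_all
  moreover have "vcomp C (T_hat M \<mu>) (wl C S (T_hat M \<mu>)) = vcomp C (T_hat M \<mu>) (wr C m (comp1 C T M))"
    unfolding T_hat_eq[OF \<mu>] by (simp add: d_natural \<mu>_assoc d_m_M)
  moreover have "vcomp C (T_hat M \<mu>) (wr C s (comp1 C T M)) = id2 C (comp1 C T M)"
    unfolding T_hat_eq[OF \<mu>] by (simp add: d_s_M \<mu>_unit)
  ultimately show ?thesis
    unfolding isalg_def cell2_def by blast
qed

lemma algmor_T_hat:
  assumes \<mu>: "isalg C X0 S0 m0 s0 M \<mu>" and \<nu>: "isalg C X0 S0 m0 s0 N \<nu>"
    and f: "algmor C S0 M \<mu> N \<nu> f"
  shows "algmor C S (comp1 C T M) (T_hat M \<mu>) (comp1 C T N) (T_hat N \<nu>) (wl C T f)"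
proof -
  note [simp] = isalg_S0D(1-5)[OF \<mu>] isalg_S0D(1-5)[OF \<nu>]
  have f_cell [simp]: "f \<in> cells C" "src2 C f = M" "tgt2 C f = N"
    and f_hom: "vcomp C f \<mu> = vcomp C \<nu> (wl C S0 f)"
    using f unfolding algmor_def cell2_def by auto
  have [simp]: "dom1 C N = dom1 C M"
    using cell_src_tgt(3)[of f] by simp
  have d_natural: "vcomp C (wl C (comp1 C T S0) f) (wr C d M) = vcomp C (wr C d N) (wl C (comp1 C S T) f)"
    using whisker_exchange[of f d] by simp
  have "wl C T (vcomp C f \<mu>) = wl C T (vcomp C \<nu> (wl C S0 f))"
    using f_hom by simp
  then have "vcomp C (wl C T f) (wl C T \<mu>) = vcomp C (wl C T \<nu>) (wl C (comp1 C T S0) f)"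
    by simp
  note Tf_hom = vcomp_assoc_cong[OF this, simplified]
  show ?thesis
    unfolding algmor_def cell2_def T_hat_eq[OF \<mu>] T_hat_eq[OF \<nu>] by (simp add: Tf_hom d_natural)
qed

lemma T_hat_wr:
  assumes \<mu>: "isalg C X0 S0 m0 s0 M \<mu>" and F: "F \<in> arrs C" "cod1 C F = dom1 C M"
  shows "T_hat (comp1 C M F) (wr C \<mu> F) = wr C (T_hat M \<mu>) F"
  using isalg_S0D(1-5)[OF \<mu>] F
  unfolding T_hat_eq[OF \<mu>] T_hat_eq[OF isalg_wr[OF \<mu> F]] by simp

lemma T_hat_t:
  assumes \<mu>: "isalg C X0 S0 m0 s0 M \<mu>"
  shows "vcomp C (wr C t M) (wl C I \<mu>) = vcomp C (T_hat M \<mu>) (wl C S (wr C t M))"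
proof -
  note [simp] = isalg_S0D(1-5)[OF \<mu>]
  have "wr C (vcomp C d (wl C S t)) M = wr C (wr C t S0) M"
    using d_t by simp
  then have d_t_M: "vcomp C (wr C d M) (wl C S (wr C t M)) = wr C t (comp1 C S0 M)"
    by simp
  have "vcomp C (wl C T \<mu>) (wr C t (comp1 C S0 M)) = vcomp C (wr C t M) (wl C I \<mu>)"
    using whisker_exchange[of \<mu> t] by simp
  then show ?thesis
    unfolding T_hat_eq[OF \<mu>] by (simp add: d_t_M)
qed

lemma T_hat_ext:
  assumes \<mu>: "isalg C X0 S0 m0 s0 M \<mu>" and \<nu>: "isalg C X0 S0 m0 s0 N \<nu>"
    and MN: "dom1 C M = dom1 C N"
    and f: "f \<in> cells C" "src2 C f = comp1 C I M" "tgt2 C f = comp1 C T N"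
    and f_hom: "vcomp C f (wl C I \<mu>) = vcomp C (T_hat N \<nu>) (wl C S f)"
  shows "vcomp C (ext M N f) (T_hat M \<mu>) = vcomp C (T_hat N \<nu>) (wl C S (ext M N f))"
proof -
  note [simp] = isalg_S0D(1-5)[OF \<mu>] isalg_S0D(1-5)[OF \<nu>] f MN
  define g where "g = vcomp C (wr C d N) (wl C S f)"
  have g_cell [simp]: "g \<in> cells C" "src2 C g = comp1 C I (comp1 C S0 M)"
    "tgt2 C g = comp1 C T (comp1 C S0 N)"
    unfolding g_def by simp_all
  have "ext (comp1 C S0 M) N (vcomp C (wl C T (id2 C N)) (vcomp C f (wl C I \<mu>)))
      = vcomp C (wl C T (id2 C N)) (vcomp C (ext M N f) (wl C T \<mu>))"
    by (rule ext_natural) auto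
  then have ext_\<mu>: "ext (comp1 C S0 M) N (vcomp C f (wl C I \<mu>)) = vcomp C (ext M N f) (wl C T \<mu>)"
    by simp
  have "ext (comp1 C S0 M) N (vcomp C (wl C T \<nu>) (vcomp C g (wl C I (id2 C (comp1 C S0 M)))))
      = vcomp C (wl C T \<nu>) (vcomp C (ext (comp1 C S0 M) (comp1 C S0 N) g) (wl C T (id2 C (comp1 C S0 M))))"
    by (rule ext_natural) auto
  then have ext_\<nu>: "ext (comp1 C S0 M) N (vcomp C (wl C T \<nu>) g)
      = vcomp C (wl C T \<nu>) (ext (comp1 C S0 M) (comp1 C S0 N) g)"
    by simp
  have "vcomp C (ext M N f) (T_hat M \<mu>) = vcomp C (vcomp C (ext M N f) (wl C T \<mu>)) (wr C d M)"
    unfolding T_hat_eq[OF \<mu>] by simp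
  also have "\<dots> = vcomp C (ext (comp1 C S0 M) N (vcomp C (wl C T \<nu>) g)) (wr C d M)"
    using f_hom ext_\<mu> unfolding T_hat_eq[OF \<nu>] g_def by simp
  also have "\<dots> = vcomp C (wl C T \<nu>) (vcomp C (ext (comp1 C S0 M) (comp1 C S0 N) g) (wr C d M))"
    unfolding ext_\<nu> by simp
  also have "\<dots> = vcomp C (T_hat N \<nu>) (wl C S (ext M N f))"
    unfolding T_hat_eq[OF \<nu>] g_def d_ext[of M N f, simplified, symmetric] by simp
  finally show ?thesis .
qed

theorem lifting_T_hat: "lifting C X0 X I T ext t S m s S0 m0 s0 T_hat"
  unfolding lifting_def cell2_def
  using isalg_T_hat algmor_T_hat T_hat_wr T_hat_ext T_hat_t
  by (auto simp: lift_of_dist_def)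

theorem dist_of_lift_T_hat: "dist_of_lift C S T S0 m0 s0 T_hat = d"
proof -
  have d_natural: "vcomp C (wr C d S0) (wl C (comp1 C S T) s0) = vcomp C (wl C (comp1 C T S0) s0) d"
    using whisker_exchange[of s0 d] by simp
  have "wl C T (vcomp C m0 (wl C S0 s0)) = wl C T (id2 C S0)"
    using m0_wl_s0 by simp
  then have "vcomp C (wl C T m0) (wl C (comp1 C T S0) s0) = id2 C (comp1 C T S0)"
    by simp
  note T_m0_unit = vcomp_assoc_subst[OF this, simplified]
  show ?thesis
    unfolding dist_of_lift_def T_hat_eq[OF isalg_free] by (simp add: d_natural T_m0_unit)
qed

end

locale algebra_lifting = relmonad_compatible_monad +
  fixes L
  assumes lifting: "lifting C X0 X I T ext t S m s S0 m0 s0 L"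
begin

lemma L_undefined: "\<not> isalg C X0 S0 m0 s0 M \<mu> \<Longrightarrow> L M \<mu> = undefined"
  using lifting by (simp add: lifting_def)

lemma isalg_L: "isalg C X0 S0 m0 s0 M \<mu> \<Longrightarrow> isalg C X S m s (comp1 C T M) (L M \<mu>)"
  using lifting by (simp add: lifting_def)

lemma algmor_L:
  "isalg C X0 S0 m0 s0 M \<mu> \<Longrightarrow> isalg C X0 S0 m0 s0 N \<nu> \<Longrightarrow> algmor C S0 M \<mu> N \<nu> f \<Longrightarrow>
   algmor C S (comp1 C T M) (L M \<mu>) (comp1 C T N) (L N \<nu>) (wl C T f)"
  using lifting by (simp add: lifting_def)

lemma L_wr:
  "isalg C X0 S0 m0 s0 M \<mu> \<Longrightarrow> F \<in> arrs C \<Longrightarrow> cod1 C F = dom1 C M \<Longrightarrow>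
   L (comp1 C M F) (wr C \<mu> F) = wr C (L M \<mu>) F"
  using lifting by (simp add: lifting_def)

lemma L_ext:
  "isalg C X0 S0 m0 s0 M \<mu> \<Longrightarrow> isalg C X0 S0 m0 s0 N \<nu> \<Longrightarrow> dom1 C M = dom1 C N \<Longrightarrow>
   f \<in> cells C \<Longrightarrow> src2 C f = comp1 C I M \<Longrightarrow> tgt2 C f = comp1 C T N \<Longrightarrow>
   vcomp C f (wl C I \<mu>) = vcomp C (L N \<nu>) (wl C S f) \<Longrightarrow>
   vcomp C (ext M N f) (L M \<mu>) = vcomp C (L N \<nu>) (wl C S (ext M N f))"
  using lifting by (simp add: lifting_def cell2_def)

lemma L_t:
  "isalg C X0 S0 m0 s0 M \<mu> \<Longrightarrow> vcomp C (wr C t M) (wl C I \<mu>) = vcomp C (L M \<mu>) (wl C S (wr C t M))"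
  using lifting by (simp add: lifting_def)

definition m0_hat where "m0_hat = L S0 m0"

lemma m0_hat_cell [simp]:
  "m0_hat \<in> cells C" "src2 C m0_hat = comp1 C S (comp1 C T S0)" "tgt2 C m0_hat = comp1 C T S0"
  using isalg_SD(3-5)[OF isalg_L[OF isalg_free]] unfolding m0_hat_def by simp_all

lemma m0_hat_s: "vcomp C m0_hat (wr C s (comp1 C T S0)) = id2 C (comp1 C T S0)"
  and m0_hat_assoc: "vcomp C m0_hat (wl C S m0_hat) = vcomp C m0_hat (wr C m (comp1 C T S0))"
  using isalg_SD(6,7)[OF isalg_L[OF isalg_free]] unfolding m0_hat_def by simp_all

lemma L_free_wr: "A \<in> arrs C \<Longrightarrow> cod1 C A = X0 \<Longrightarrow> L (comp1 C S0 A) (wr C m0 A) = wr C m0_hat A"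
  unfolding m0_hat_def by (rule L_wr[OF isalg_free]) auto

abbreviation "d \<equiv> dist_of_lift C S T S0 m0 s0 L"

lemma d_eq: "d = vcomp C m0_hat (wl C (comp1 C S T) s0)"
  unfolding dist_of_lift_def m0_hat_def ..

lemma d_cell [simp]: "d \<in> cells C" "src2 C d = comp1 C S T" "tgt2 C d = comp1 C T S0"
  unfolding d_eq by simp_all

lemma d_s: "vcomp C d (wr C s T) = wl C T s0"
proof -
  have "vcomp C (wl C (comp1 C S T) s0) (wr C s T) = vcomp C (wr C s (comp1 C T S0)) (wl C T s0)"
    using whisker_exchange[of "wl C T s0" s] by simp
  then show ?thesis
    unfolding d_eq by (simp add: vcomp_assoc_subst[OF m0_hat_s, simplified])
qed

lemma d_t: "vcomp C d (wl C S t) = wr C t S0"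
proof -
  have "vcomp C (wl C T s0) t = vcomp C (wr C t S0) (wl C I s0)"
    using whisker_exchange[of s0 t] by simp
  then have "wl C S (vcomp C (wl C T s0) t) = wl C S (vcomp C (wr C t S0) (wl C I s0))"
    by simp
  then have s0_t: "vcomp C (wl C (comp1 C S T) s0) (wl C S t)
      = vcomp C (wl C S (wr C t S0)) (wl C (comp1 C I S0) s0)"
    by simp
  have "vcomp C (wr C t S0) (wl C I m0) = vcomp C m0_hat (wl C S (wr C t S0))"
    using L_t[OF isalg_free] unfolding m0_hat_def .
  note m0_hat_t = vcomp_assoc_cong[OF this[symmetric], simplified]
  have "wl C I (vcomp C m0 (wl C S0 s0)) = wl C I (id2 C S0)"
    using m0_wl_s0 by simp
  then have "vcomp C (wl C I m0) (wl C (comp1 C I S0) s0) = id2 C (comp1 C I S0)"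
    by simp
  then show ?thesis
    unfolding d_eq by (simp add: s0_t m0_hat_t)
qed

lemma d_m: "vcomp C d (wr C m T) = vcomp C (wl C T m0) (vcomp C (wr C d S0) (wl C S d))"
proof -
  have "algmor C S (comp1 C T (comp1 C S0 S0)) (L (comp1 C S0 S0) (wr C m0 S0))
      (comp1 C T S0) m0_hat (wl C T m0)"
    using algmor_L[OF isalg_free_wr[of S0] isalg_free algmor_structure[OF isalg_free]]
    unfolding m0_hat_def by simp
  then have "vcomp C (wl C T m0) (wr C m0_hat S0) = vcomp C m0_hat (wl C (comp1 C S T) m0)"
    unfolding algmor_def L_free_wr[of S0, simplified] by simp
  note T_m0_hom = vcomp_assoc_cong[OF this, simplified]
  have "wl C (comp1 C S T) (vcomp C m0 (wr C s0 S0)) = wl C (comp1 C S T) (id2 C S0)"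
    using m0_wr_s0 by simp
  then have "vcomp C (wl C (comp1 C S T) m0) (wl C (comp1 C S T) (wr C s0 S0))
      = id2 C (comp1 C S (comp1 C T S0))"
    by simp
  note ST_m0_unit = vcomp_assoc_subst[OF this, simplified]
  have s0_m: "vcomp C (wl C (comp1 C S T) s0) (wr C m T)
      = vcomp C (wr C m (comp1 C T S0)) (wl C (comp1 C S (comp1 C S T)) s0)"
    using whisker_exchange[of "wl C T s0" m] by simp
  show ?thesis
    unfolding d_eq
    by (simp add: T_m0_hom ST_m0_unit vcomp_assoc_cong[OF m0_hat_assoc, simplified] s0_m)
qed

text \<open>For f : IA \<Rightarrow> TB, the 2-cell dB \<cdot> Sf satisfies the hypothesis of condition (a) for the free
  algebras on A and B; this is what condition (a) contributes to axiom (D3).\<close>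

lemma d_wl_S_free_hom:
  assumes A: "A \<in> arrs C" "cod1 C A = X0" and B: "B \<in> arrs C" "cod1 C B = X0"
    and f: "f \<in> cells C" "src2 C f = comp1 C I A" "tgt2 C f = comp1 C T B"
  shows "vcomp C (vcomp C (wr C d B) (wl C S f)) (wl C I (wr C m0 A))
       = vcomp C (L (comp1 C S0 B) (wr C m0 B)) (wl C S (vcomp C (wr C d B) (wl C S f)))"
proof -
  note [simp] = A B f
  define h where "h = vcomp C (wl C T (wr C s0 B)) f"
  have h_cell [simp]: "h \<in> cells C" "src2 C h = comp1 C I A" "tgt2 C h = comp1 C T (comp1 C S0 B)"
    unfolding h_def by simp_all
  have "vcomp C (wl C S h) (wr C m (comp1 C I A))
      = vcomp C (wr C m (comp1 C T (comp1 C S0 B))) (wl C (comp1 C S S) h)"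
    using whisker_exchange[of h m] by simp
  then have h_m: "vcomp C (wl C (comp1 C S T) (wr C s0 B)) (vcomp C (wl C S f) (wr C m (comp1 C I A)))
      = vcomp C (wr C m (comp1 C T (comp1 C S0 B)))
          (vcomp C (wl C (comp1 C S (comp1 C S T)) (wr C s0 B)) (wl C (comp1 C S S) f))"
    unfolding h_def by simp
  have "wr C (vcomp C m0_hat (wl C S m0_hat)) B = wr C (vcomp C m0_hat (wr C m (comp1 C T S0))) B"
    using m0_hat_assoc by simp
  then have "vcomp C (wr C m0_hat B) (wl C S (wr C m0_hat B))
      = vcomp C (wr C m0_hat B) (wr C m (comp1 C T (comp1 C S0 B)))"
    by simp
  note m0_hat_assoc_B = vcomp_assoc_cong[OF this[symmetric], simplified]
  show ?thesis
    unfolding L_free_wr[OF B] d_eq wl_I_wr_m0[OF A]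
    by (simp add: h_m m0_hat_assoc_B)
qed

lemma d_wl_S_unit:
  assumes A: "A \<in> arrs C" "cod1 C A = X0" and B: "B \<in> arrs C" "cod1 C B = X0"
    and f: "f \<in> cells C" "src2 C f = comp1 C I A" "tgt2 C f = comp1 C T B"
  shows "vcomp C (vcomp C (wr C d B) (wl C S f)) (wl C I (wr C s0 A)) = vcomp C (wl C T (wr C s0 B)) f"
proof -
  note [simp] = A B f
  define h where "h = vcomp C (wl C T (wr C s0 B)) f"
  have h_cell [simp]: "h \<in> cells C" "src2 C h = comp1 C I A" "tgt2 C h = comp1 C T (comp1 C S0 B)"
    unfolding h_def by simp_all
  have "vcomp C (wl C S h) (wr C s (comp1 C I A)) = vcomp C (wr C s (comp1 C T (comp1 C S0 B))) h"
    using whisker_exchange[of h s] by simp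
  then have h_s: "vcomp C (wl C (comp1 C S T) (wr C s0 B)) (vcomp C (wl C S f) (wr C s (comp1 C I A)))
      = vcomp C (wr C s (comp1 C T (comp1 C S0 B))) (vcomp C (wl C T (wr C s0 B)) f)"
    unfolding h_def by simp
  have "wr C (vcomp C m0_hat (wr C s (comp1 C T S0))) B = wr C (id2 C (comp1 C T S0)) B"
    using m0_hat_s by simp
  then have "vcomp C (wr C m0_hat B) (wr C s (comp1 C T (comp1 C S0 B))) = id2 C (comp1 C T (comp1 C S0 B))"
    by simp
  note m0_hat_s_B = vcomp_assoc_subst[OF this, simplified]
  show ?thesis
    unfolding d_eq wl_I_wr_s0[OF A] by (simp add: h_s m0_hat_s_B)
qed

lemma d_ext:
  assumes A: "A \<in> arrs C" "cod1 C A = X0" and B: "B \<in> arrs C" "cod1 C B = X0"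
    and AB: "dom1 C A = dom1 C B"
    and f: "f \<in> cells C" "src2 C f = comp1 C I A" "tgt2 C f = comp1 C T B"
  shows "vcomp C (wr C d B) (wl C S (ext A B f))
       = vcomp C (ext (comp1 C S0 A) (comp1 C S0 B) (vcomp C (wr C d B) (wl C S f))) (wr C d A)"
proof -
  note [simp] = A B AB f
  define g where "g = vcomp C (wr C d B) (wl C S f)"
  have g_cell [simp]: "g \<in> cells C" "src2 C g = comp1 C I (comp1 C S0 A)"
    "tgt2 C g = comp1 C T (comp1 C S0 B)"
    unfolding g_def by simp_all
  define E where "E = ext (comp1 C S0 A) (comp1 C S0 B) g"
  have E_cell [simp]: "E \<in> cells C" "src2 C E = comp1 C T (comp1 C S0 A)"
    "tgt2 C E = comp1 C T (comp1 C S0 B)"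
    unfolding E_def by simp_all
  have E_hom: "vcomp C E (wr C m0_hat A) = vcomp C (wr C m0_hat B) (wl C S E)"
    using L_ext[OF isalg_free_wr[OF A] isalg_free_wr[OF B] _ g_cell]
      d_wl_S_free_hom[OF A B f] L_free_wr[OF A] L_free_wr[OF B]
    unfolding E_def g_def by simp
  have "ext A (comp1 C S0 B) (vcomp C (wl C T (id2 C (comp1 C S0 B))) (vcomp C g (wl C I (wr C s0 A))))
      = vcomp C (wl C T (id2 C (comp1 C S0 B))) (vcomp C E (wl C T (wr C s0 A)))"
    unfolding E_def by (rule ext_natural) auto
  then have ext_g: "ext A (comp1 C S0 B) (vcomp C g (wl C I (wr C s0 A))) = vcomp C E (wl C T (wr C s0 A))"
    by simp
  have "ext A (comp1 C S0 B) (vcomp C (wl C T (wr C s0 B)) (vcomp C f (wl C I (id2 C A))))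
      = vcomp C (wl C T (wr C s0 B)) (vcomp C (ext A B f) (wl C T (id2 C A)))"
    by (rule ext_natural) auto
  then have ext_f: "ext A (comp1 C S0 B) (vcomp C (wl C T (wr C s0 B)) f)
      = vcomp C (wl C T (wr C s0 B)) (ext A B f)"
    by simp
  have "vcomp C E (wr C d A) = vcomp C (vcomp C E (wr C m0_hat A)) (wl C (comp1 C S T) (wr C s0 A))"
    unfolding d_eq by simp
  also have "\<dots> = vcomp C (wr C m0_hat B) (wl C S (vcomp C E (wl C T (wr C s0 A))))"
    unfolding E_hom by simp
  also have "\<dots> = vcomp C (wr C m0_hat B) (wl C S (vcomp C (wl C T (wr C s0 B)) (ext A B f)))"
    unfolding ext_g[symmetric] g_def d_wl_S_unit[OF A B f] ext_f ..
  also have "\<dots> = vcomp C (wr C d B) (wl C S (ext A B f))"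
    unfolding d_eq by simp
  finally show ?thesis
    unfolding E_def g_def by simp
qed

theorem reldist_d: "reldist C X0 I T ext t S m s S0 m0 s0 d"
  unfolding reldist_def cell2_def span_def
  using d_m d_s d_ext d_t by auto

theorem lift_of_dist_d: "lift_of_dist C X0 T S0 m0 s0 d = L"
proof (intro ext)
  fix M \<mu>
  show "lift_of_dist C X0 T S0 m0 s0 d M \<mu> = L M \<mu>"
  proof (cases "isalg C X0 S0 m0 s0 M \<mu>")
    case False
    then show ?thesis
      unfolding lift_of_dist_def using L_undefined by simp
  next
    case \<mu>: True
    note [simp] = isalg_S0D(1-5)[OF \<mu>] isalg_SD(3-5)[OF isalg_L[OF \<mu>]]
    have "algmor C S (comp1 C T (comp1 C S0 M)) (L (comp1 C S0 M) (wr C m0 M))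
        (comp1 C T M) (L M \<mu>) (wl C T \<mu>)"
      using algmor_L[OF isalg_free_wr \<mu> algmor_structure[OF \<mu>]] by simp
    then have "vcomp C (wl C T \<mu>) (wr C m0_hat M) = vcomp C (L M \<mu>) (wl C (comp1 C S T) \<mu>)"
      unfolding algmor_def L_free_wr[OF isalg_S0D(1,2)[OF \<mu>]] by simp
    note T\<mu>_hom = vcomp_assoc_cong[OF this, simplified]
    have "wl C (comp1 C S T) (vcomp C \<mu> (wr C s0 M)) = wl C (comp1 C S T) (id2 C M)"
      using isalg_S0D(6)[OF \<mu>] by simp
    then have "vcomp C (wl C (comp1 C S T) \<mu>) (wl C (comp1 C S T) (wr C s0 M))
        = id2 C (comp1 C S (comp1 C T M))"
      by simp
    then show ?thesis
      unfolding lift_of_dist_def d_eq using \<mu> by (simp add: T\<mu>_hom)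
  qed
qed

end

theorem mainTheorem12:
  fixes C :: "('o,'a,'c) twocat"
  assumes "twocat C" and "X0 \<in> obs C" and "X \<in> obs C"
    and "relmonad C X0 X I T ext t"
    and "monad C X S m s" and "monad C X0 S0 m0 s0"
    and "compatible C I S m s S0 m0 s0"
  shows "(\<forall>d. reldist C X0 I T ext t S m s S0 m0 s0 d \<longrightarrow>
              lifting C X0 X I T ext t S m s S0 m0 s0 (lift_of_dist C X0 T S0 m0 s0 d))
       \<and> (\<forall>L. lifting C X0 X I T ext t S m s S0 m0 s0 L \<longrightarrow>
              reldist C X0 I T ext t S m s S0 m0 s0 (dist_of_lift C S T S0 m0 s0 L))
       \<and> (\<forall>d. reldist C X0 I T ext t S m s S0 m0 s0 d \<longrightarrow>
              dist_of_lift C S T S0 m0 s0 (lift_of_dist C X0 T S0 m0 s0 d) = d)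
       \<and> (\<forall>L. lifting C X0 X I T ext t S m s S0 m0 s0 L \<longrightarrow>
              lift_of_dist C X0 T S0 m0 s0 (dist_of_lift C S T S0 m0 s0 L) = L)"
proof -
  interpret relmonad_compatible_monad C X0 X I T ext t S m s S0 m0 s0
    using assms by unfold_locales
  have "lifting C X0 X I T ext t S m s S0 m0 s0 (lift_of_dist C X0 T S0 m0 s0 d)
      \<and> dist_of_lift C S T S0 m0 s0 (lift_of_dist C X0 T S0 m0 s0 d) = d"
    if "reldist C X0 I T ext t S m s S0 m0 s0 d" for d
  proof -
    interpret relative_distributive_law C X0 X I T ext t S m s S0 m0 s0 d
      using that by unfold_locales
    show ?thesis using lifting_T_hat dist_of_lift_T_hat by simp
  qed
  moreover have "reldist C X0 I T ext t S m s S0 m0 s0 (dist_of_lift C S T S0 m0 s0 L)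
      \<and> lift_of_dist C X0 T S0 m0 s0 (dist_of_lift C S T S0 m0 s0 L) = L"
    if "lifting C X0 X I T ext t S m s S0 m0 s0 L" for L
  proof -
    interpret algebra_lifting C X0 X I T ext t S m s S0 m0 s0 L
      using that by unfold_locales
    show ?thesis using reldist_d lift_of_dist_d by simp
  qed
  ultimately show ?thesis by blast
qed

end
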